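(* If $\sigma\in\operatorname{Aut}(\mathcal{H}_N)$, then $\sigma(\mathcal{H}_N')=\mathcal{H}_N'$ and $\sigma(\mathfrak h)=\mathfrak h$.
   Context: $\mathbb{K}$ is an algebraically closed field of characteristic zero, $N=2m\ge2$ even, $(\cdot,\cdot)$ the bilinear form on $\mathbb{K}^N$ with $(e_i,e_j)=\delta_{ij}$. Let $A_N=\mathbb{K}[t_1^{\pm1},\dots,t_N^{\pm1}]$, $d_i=t_i\frac{\partial}{\partial t_i}$, $t^{\bm r}=t_1^{r_1}\cdots t_N^{r_N}$, $D(u,\bm r)=\sum_i u_it^{\bm r}d_i$. Let $\bm J=\begin{pmatrix} O_m & I_m\\ -I_m & O_m\end{pmatrix}$, $\overline{\bm r}=\bm J\bm r$, $h_{\bm r}=D(\overline{\bm r},\bm r)$, $\mathfrak h=\operatorname{span}_{\mathbb{K}}\{d_1,\dots,d_N\}=\{D(u,\bm0):u\in\mathbb{K}^N\}$. The Hamiltonian Lie algebra is $\mathcal{H}_N=\operatorname{span}_{\mathbb{K}}\{h_{\bm r}:\bm r\ne\bm0\}\oplus\mathfrak h$ with commutator bracket ($[h_{\bm r},h_{\bm s}]=(\overline{\bm r},\bm s)h_{\bm r+\bm s}$, $[D(u,\bm0),h_{\bm r}]=(u,\bm r)h_{\bm r}$), and $\mathcal{H}_N'=[\mathcal{H}_N,\mathcal{H}_N]=\operatorname{span}_{\mathbb{K}}\{h_{\bm r}:\bm r\ne\bm0\}$. *)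

theory Defs
  imports "HOL-Computational_Algebra.Polynomial"
begin

text \<open>Concrete model of the Hamiltonian Lie algebra H_N, N = 2m.
  Lattice vectors r in Z^N are functions nat => int vanishing outside {..<N};
  an element  sum_r c(r) h_r + D(u,0)  is encoded as the pair (c, u), where
  c : Z^N => K is finitely supported with c 0 = 0, and u : nat => K vanishes outside {..<N}.\<close>

type_synonym 'k ham = "((nat \<Rightarrow> int) \<Rightarrow> 'k) \<times> (nat \<Rightarrow> 'k)"

definition lat :: "nat \<Rightarrow> (nat \<Rightarrow> int) set" where
  "lat N = {r. \<forall>i\<ge>N. r i = 0}"

text \<open>The bilinear form (Jr, s) with J = [[0, I_m], [-I_m, 0]]:
  (Jr)_i = r_(i+m) for i < m, (Jr)_(m+i) = - r_i.\<close>
definition sympl :: "nat \<Rightarrow> (nat \<Rightarrow> int) \<Rightarrow> (nat \<Rightarrow> int) \<Rightarrow> int" where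
  "sympl m r s = (\<Sum>i<m. r (i + m) * s i - r i * s (i + m))"

definition pair :: "nat \<Rightarrow> (nat \<Rightarrow> 'k::field) \<Rightarrow> (nat \<Rightarrow> int) \<Rightarrow> 'k" where
  "pair N u s = (\<Sum>i<N. u i * of_int (s i))"

definition ham_carrier :: "nat \<Rightarrow> ('k::field) ham set" where
  "ham_carrier m = {(c, u). finite {r. c r \<noteq> 0} \<and> (\<forall>r. c r \<noteq> 0 \<longrightarrow> r \<in> lat (2*m) \<and> r \<noteq> (\<lambda>i. 0))
                     \<and> (\<forall>i\<ge>2*m. u i = 0)}"

definition ham_add :: "('k::field) ham \<Rightarrow> 'k ham \<Rightarrow> 'k ham" where
  "ham_add x y = ((\<lambda>r. fst x r + fst y r), (\<lambda>i. snd x i + snd y i))"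

definition ham_scale :: "'k::field \<Rightarrow> 'k ham \<Rightarrow> 'k ham" where
  "ham_scale a x = ((\<lambda>r. a * fst x r), (\<lambda>i. a * snd x i))"

text \<open>Bracket: [h_r, h_s] = (Jr, s) h_(r+s), [D(u,0), h_r] = (u, r) h_r, [h, h] = 0.\<close>
definition ham_bracket :: "nat \<Rightarrow> ('k::field) ham \<Rightarrow> 'k ham \<Rightarrow> 'k ham" where
  "ham_bracket m x y =
     ((\<lambda>s. if s = (\<lambda>i. 0) then 0 else
            (\<Sum>r\<in>{r. fst x r \<noteq> 0}. fst x r * fst y (\<lambda>i. s i - r i) * of_int (sympl m r (\<lambda>i. s i - r i)))
            + pair (2*m) (snd x) s * fst y s - pair (2*m) (snd y) s * fst x s),
      (\<lambda>i. 0))"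

definition ham_aut :: "nat \<Rightarrow> (('k::field) ham \<Rightarrow> 'k ham) \<Rightarrow> bool" where
  "ham_aut m \<sigma> \<longleftrightarrow> bij_betw \<sigma> (ham_carrier m) (ham_carrier m)
     \<and> (\<forall>x\<in>ham_carrier m. \<forall>y\<in>ham_carrier m. \<sigma> (ham_add x y) = ham_add (\<sigma> x) (\<sigma> y))
     \<and> (\<forall>a. \<forall>x\<in>ham_carrier m. \<sigma> (ham_scale a x) = ham_scale a (\<sigma> x))
     \<and> (\<forall>x\<in>ham_carrier m. \<forall>y\<in>ham_carrier m.
          \<sigma> (ham_bracket m x y) = ham_bracket m (\<sigma> x) (\<sigma> y))"

text \<open>H_N' = span of the h_r (r nonzero); h = span of d_1..d_N.\<close>
definition ham_derived :: "nat \<Rightarrow> ('k::field) ham set" where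
  "ham_derived m = {x \<in> ham_carrier m. snd x = (\<lambda>i. 0)}"

definition ham_cartan :: "nat \<Rightarrow> ('k::field) ham set" where
  "ham_cartan m = {x \<in> ham_carrier m. fst x = (\<lambda>r. 0)}"

end

theory Submission
  imports Defs "HOL-Library.Fun_Lexorder"
begin

(*
  Each h_r is a bracket, h_r = [d_k, h_r / r_k] for any k with r_k <> 0, so an automorphism maps
  H_N' into H_N'; by linearity it maps an element of H_N' with support F into the span of the
  images of the h_t, t in F, which is supported on a finite set depending only on F.

  Elements of h act diagonally, so for d in h all iterates (ad d)^n z are supported in supp z.
  By the previous remark this local finiteness of ad is preserved by automorphisms. Conversely,
  let x have a nonzero H_N'-component and choose a translation-invariant total order of Z^N (the
  lexicographic order or its reverse) in which the top exponent r0 of that component is positive.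
  For s with (J r0, s) <> 0, the coefficient of h_(s + n r0) in (ad x)^n h_s is
  (c_r0 (J r0, s))^n <> 0, so the iterates are not supported in a finite set. Hence an
  automorphism maps h into h, and both inclusions become equalities because the automorphism is
  bijective and H_N = h + H_N'.
*)

definition ham_supp :: "('k::field) ham \<Rightarrow> (nat \<Rightarrow> int) set" where
  "ham_supp x = {r. fst x r \<noteq> 0}"

definition ham_zero :: "('k::field) ham" where
  "ham_zero = ((\<lambda>r. 0), (\<lambda>i. 0))"

definition ham_h :: "(nat \<Rightarrow> int) \<Rightarrow> ('k::field) ham" where
  "ham_h t = ((\<lambda>r. if r = t then 1 else 0), (\<lambda>i. 0))"

lemma ham_carrier_iff:
  "x \<in> ham_carrier m \<longleftrightarrow> finite (ham_supp x) \<and> (\<forall>r\<in>ham_supp x. r \<in> lat (2*m) \<and> r \<noteq> (\<lambda>i. 0))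
     \<and> (\<forall>i\<ge>2*m. snd x i = 0)"
  by (cases x) (auto simp: ham_carrier_def ham_supp_def)

lemma lat_add: "r \<in> lat N \<Longrightarrow> s \<in> lat N \<Longrightarrow> (\<lambda>i. r i + s i) \<in> lat N"
  by (simp add: lat_def)

lemma ham_supp_ham_h [simp]: "ham_supp (ham_h t :: ('k::field) ham) = {t}"
  by (simp add: ham_supp_def ham_h_def)

lemma ham_h_in_carrier: "t \<in> lat (2*m) \<Longrightarrow> t \<noteq> (\<lambda>i. 0) \<Longrightarrow> ham_h t \<in> ham_carrier m"
  by (simp add: ham_carrier_iff) (simp add: ham_h_def)

lemma ham_scale_in_carrier:
  assumes "x \<in> ham_carrier m"
  shows "ham_scale a x \<in> ham_carrier m"
proof -
  have "ham_supp (ham_scale a x) \<subseteq> ham_supp x"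
    by (auto simp: ham_supp_def ham_scale_def)
  then show ?thesis
    using assms by (auto simp: ham_carrier_iff ham_scale_def intro: finite_subset)
qed

lemma ham_add_in_carrier:
  assumes "x \<in> ham_carrier m" and "y \<in> ham_carrier m"
  shows "ham_add x y \<in> ham_carrier m"
proof -
  have "ham_supp (ham_add x y) \<subseteq> ham_supp x \<union> ham_supp y"
    by (auto simp: ham_supp_def ham_add_def)
  then show ?thesis
    using assms by (auto simp: ham_carrier_iff ham_add_def intro: finite_subset)
qed

lemma fst_ham_bracket:
  "fst (ham_bracket m x y) t = (if t = (\<lambda>i. 0) then 0 else
     (\<Sum>r\<in>ham_supp x. fst x r * fst y (\<lambda>i. t i - r i) * of_int (sympl m r (\<lambda>i. t i - r i)))
     + pair (2*m) (snd x) t * fst y t - pair (2*m) (snd y) t * fst x t)"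
  by (simp add: ham_bracket_def ham_supp_def)

lemma snd_ham_bracket [simp]: "snd (ham_bracket m x y) = (\<lambda>i. 0)"
  by (simp add: ham_bracket_def)

lemma ham_supp_bracket:
  "ham_supp (ham_bracket m x y) \<subseteq>
     (\<lambda>(r, s). (\<lambda>i. r i + s i)) ` (ham_supp x \<times> ham_supp y) \<union> ham_supp x \<union> ham_supp y"
proof
  fix t assume t: "t \<in> ham_supp (ham_bracket m x y)"
  show "t \<in> (\<lambda>(r, s). (\<lambda>i. r i + s i)) ` (ham_supp x \<times> ham_supp y) \<union> ham_supp x \<union> ham_supp y"
  proof (cases "\<exists>r\<in>ham_supp x. (\<lambda>i. t i - r i) \<in> ham_supp y")
    case True
    then obtain r where "r \<in> ham_supp x" "(\<lambda>i. t i - r i) \<in> ham_supp y" by blast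
    then have "t \<in> (\<lambda>(r, s). (\<lambda>i. r i + s i)) ` (ham_supp x \<times> ham_supp y)"
      by (intro image_eqI[where x = "(r, \<lambda>i. t i - r i)"]) auto
    then show ?thesis by blast
  next
    case False
    then have "(\<Sum>r\<in>ham_supp x. fst x r * fst y (\<lambda>i. t i - r i) * of_int (sympl m r (\<lambda>i. t i - r i))) = 0"
      by (intro sum.neutral) (auto simp: ham_supp_def)
    moreover have "fst (ham_bracket m x y) t \<noteq> 0"
      using t by (simp add: ham_supp_def)
    ultimately have "fst x t \<noteq> 0 \<or> fst y t \<noteq> 0"
      by (auto simp: fst_ham_bracket split: if_splits)
    then show ?thesis by (auto simp: ham_supp_def)
  qed
qed

lemma ham_bracket_in_carrier:
  assumes x: "x \<in> ham_carrier m" and y: "y \<in> ham_carrier m"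
  shows "ham_bracket m x y \<in> ham_carrier m"
  unfolding ham_carrier_iff
proof (intro conjI ballI allI impI)
  show "finite (ham_supp (ham_bracket m x y))"
    using x y by (auto simp: ham_carrier_iff intro: finite_subset[OF ham_supp_bracket])
next
  fix t assume t: "t \<in> ham_supp (ham_bracket m x y)"
  then show "t \<noteq> (\<lambda>i. 0)" by (auto simp: ham_supp_def fst_ham_bracket)
  show "t \<in> lat (2*m)"
    using subsetD[OF ham_supp_bracket t] x y by (auto simp: ham_carrier_iff intro: lat_add)
qed simp

lemma funpow_ham_bracket_in_carrier:
  "x \<in> ham_carrier m \<Longrightarrow> z \<in> ham_carrier m \<Longrightarrow> (ham_bracket m x ^^ n) z \<in> ham_carrier m"
  by (induction n) (simp_all add: ham_bracket_in_carrier)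

lemma ham_h_eq_bracket:
  fixes t :: "nat \<Rightarrow> int"
  assumes t: "t \<in> lat (2*m)" "t \<noteq> (\<lambda>i. 0)"
  obtains a b where "a \<in> ham_carrier m" "b \<in> ham_carrier m"
    and "(ham_h t :: ('k::field_char_0) ham) = ham_bracket m a b"
proof -
  obtain k where k: "t k \<noteq> 0" using t(2) by auto
  then have "k < 2*m" using t(1) by (auto simp: lat_def not_le[symmetric])
  define a :: "'k ham" where "a = ((\<lambda>r. 0), (\<lambda>i. if i = k then 1 else 0))"
  define b :: "'k ham" where "b = ham_scale (1 / of_int (t k)) (ham_h t)"
  have "pair (2*m) (\<lambda>i. if i = k then 1 else (0::'k)) s = of_int (s k)" for s
  proof -
    have "pair (2*m) (\<lambda>i. if i = k then 1 else (0::'k)) s = (\<Sum>i<2*m. if i = k then of_int (s k) else 0)"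
      unfolding pair_def by (rule sum.cong) auto
    then show ?thesis using \<open>k < 2*m\<close> by simp
  qed
  then have "ham_bracket m a b = ham_h t"
    using k t(2) by (auto simp: ham_bracket_def a_def b_def ham_h_def ham_scale_def pair_def)
  moreover have "a \<in> ham_carrier m"
    using \<open>k < 2*m\<close> by (auto simp: a_def ham_carrier_def)
  moreover have "b \<in> ham_carrier m"
    unfolding b_def by (intro ham_scale_in_carrier ham_h_in_carrier t)
  ultimately show ?thesis using that by metis
qed

lemma ham_aut_in_carrier: "ham_aut m \<sigma> \<Longrightarrow> x \<in> ham_carrier m \<Longrightarrow> \<sigma> x \<in> ham_carrier m"
  unfolding ham_aut_def bij_betw_def by blast

lemma ham_aut_image: "ham_aut m \<sigma> \<Longrightarrow> \<sigma> ` ham_carrier m = ham_carrier m"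
  unfolding ham_aut_def bij_betw_def by blast

lemma ham_aut_add:
  "ham_aut m \<sigma> \<Longrightarrow> x \<in> ham_carrier m \<Longrightarrow> y \<in> ham_carrier m \<Longrightarrow>
     \<sigma> (ham_add x y) = ham_add (\<sigma> x) (\<sigma> y)"
  unfolding ham_aut_def by blast

lemma ham_aut_scale:
  "ham_aut m \<sigma> \<Longrightarrow> x \<in> ham_carrier m \<Longrightarrow> \<sigma> (ham_scale a x) = ham_scale a (\<sigma> x)"
  unfolding ham_aut_def by blast

lemma ham_aut_bracket:
  "ham_aut m \<sigma> \<Longrightarrow> x \<in> ham_carrier m \<Longrightarrow> y \<in> ham_carrier m \<Longrightarrow>
     \<sigma> (ham_bracket m x y) = ham_bracket m (\<sigma> x) (\<sigma> y)"
  unfolding ham_aut_def by blast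

lemma ham_zero_in_carrier: "ham_zero \<in> ham_carrier m"
  by (simp add: ham_carrier_def ham_zero_def)

lemma ham_aut_zero:
  assumes "ham_aut m \<sigma>"
  shows "\<sigma> ham_zero = ham_zero"
proof -
  have "\<sigma> (ham_scale 0 ham_zero) = ham_scale 0 (\<sigma> ham_zero)"
    using assms ham_zero_in_carrier by (rule ham_aut_scale)
  then show ?thesis by (simp add: ham_scale_def ham_zero_def)
qed

lemma ham_aut_eq_zero_iff:
  assumes "ham_aut m \<sigma>" and "x \<in> ham_carrier m"
  shows "\<sigma> x = ham_zero \<longleftrightarrow> x = ham_zero"
  using assms ham_zero_in_carrier ham_aut_zero[OF assms(1)]
  unfolding ham_aut_def bij_betw_def by (metis inj_onD)

lemma ham_aut_funpow_bracket:
  assumes aut: "ham_aut m \<sigma>" and "x \<in> ham_carrier m" "z \<in> ham_carrier m"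
  shows "\<sigma> ((ham_bracket m x ^^ n) z) = (ham_bracket m (\<sigma> x) ^^ n) (\<sigma> z)"
  by (induction n) (simp_all add: assms ham_aut_bracket funpow_ham_bracket_in_carrier)

lemma ham_aut_ham_h_in_derived:
  fixes \<sigma> :: "('k::field_char_0) ham \<Rightarrow> 'k ham"
  assumes aut: "ham_aut m \<sigma>" and t: "t \<in> lat (2*m)" "t \<noteq> (\<lambda>i. 0)"
  shows "\<sigma> (ham_h t) \<in> ham_derived m"
proof -
  obtain a b where ab: "a \<in> ham_carrier m" "b \<in> ham_carrier m" "(ham_h t :: 'k ham) = ham_bracket m a b"
    using ham_h_eq_bracket[OF t] .
  then have "\<sigma> (ham_h t) = ham_bracket m (\<sigma> a) (\<sigma> b)"
    using aut by (simp add: ham_aut_bracket)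
  then show ?thesis
    using ab ham_aut_in_carrier[OF aut] by (simp add: ham_derived_def ham_bracket_in_carrier)
qed

lemma ham_aut_derived_supp:
  fixes \<sigma> :: "('k::field_char_0) ham \<Rightarrow> 'k ham"
  assumes aut: "ham_aut m \<sigma>" and q: "q \<in> ham_derived m"
  shows "\<sigma> q \<in> ham_derived m \<and> ham_supp (\<sigma> q) \<subseteq> (\<Union>t\<in>ham_supp q. ham_supp (\<sigma> (ham_h t)))"
proof -
  have "\<sigma> q \<in> ham_derived m \<and> ham_supp (\<sigma> q) \<subseteq> (\<Union>t\<in>F. ham_supp (\<sigma> (ham_h t)))"
    if "finite F" "q \<in> ham_derived m" "ham_supp q = F" for F q
    using that
  proof (induction F arbitrary: q rule: finite_induct)
    case empty
    then have "q = ham_zero"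
      by (cases q) (auto simp: ham_derived_def ham_supp_def ham_zero_def)
    then show ?case
      using ham_aut_zero[OF aut] ham_zero_in_carrier by (simp add: ham_derived_def ham_zero_def ham_supp_def)
  next
    case (insert t F)
    define q' where "q' = ((fst q)(t := 0), snd q)"
    have t: "t \<in> lat (2*m)" "t \<noteq> (\<lambda>i. 0)"
      using insert.prems by (auto simp: ham_derived_def ham_carrier_iff)
    have q': "q' \<in> ham_derived m" "ham_supp q' = F"
      using insert.hyps(2) insert.prems
      by (auto simp: q'_def ham_derived_def ham_carrier_iff ham_supp_def intro: finite_subset[rotated])
    let ?h = "ham_scale (fst q t) (ham_h t) :: 'k ham"
    have "q = ham_add ?h q'"
      using insert.prems(1)
      by (cases q) (auto simp: ham_add_def ham_scale_def ham_h_def q'_def ham_derived_def)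
    then have "\<sigma> q = \<sigma> (ham_add ?h q')" by simp
    also have "\<dots> = ham_add (\<sigma> ?h) (\<sigma> q')"
      using q'(1) unfolding ham_derived_def
      by (intro ham_aut_add[OF aut] ham_scale_in_carrier ham_h_in_carrier[OF t]) simp_all
    also have "\<sigma> ?h = ham_scale (fst q t) (\<sigma> (ham_h t))"
      by (intro ham_aut_scale[OF aut] ham_h_in_carrier[OF t])
    moreover have "\<sigma> (ham_h t) \<in> ham_derived m"
      by (rule ham_aut_ham_h_in_derived[OF aut t])
    ultimately show ?case
      using insert.IH[OF q'] by (auto simp: ham_derived_def ham_add_in_carrier ham_scale_in_carrier)
        (auto simp: ham_supp_def ham_add_def ham_scale_def)
  qed
  moreover have "finite (ham_supp q)"
    using q by (simp add: ham_derived_def ham_carrier_iff)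
  ultimately show ?thesis using q by blast
qed

definition ham_ad_locally_finite :: "nat \<Rightarrow> ('k::field) ham \<Rightarrow> bool" where
  "ham_ad_locally_finite m x \<longleftrightarrow>
     (\<forall>z\<in>ham_carrier m. finite (\<Union>n. ham_supp ((ham_bracket m x ^^ n) z)))"

lemma ham_supp_bracket_cartan:
  "d \<in> ham_cartan m \<Longrightarrow> ham_supp (ham_bracket m d z) \<subseteq> ham_supp z"
  by (auto simp: ham_cartan_def ham_supp_def fst_ham_bracket)

lemma ham_cartan_ad_locally_finite:
  fixes d :: "('k::field) ham"
  assumes "d \<in> ham_cartan m"
  shows "ham_ad_locally_finite m d"
  unfolding ham_ad_locally_finite_def
proof
  fix z :: "'k ham" assume "z \<in> ham_carrier m"
  moreover have "ham_supp ((ham_bracket m d ^^ n) z) \<subseteq> ham_supp z" for n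
  proof (induction n)
    case (Suc n)
    then show ?case
      using ham_supp_bracket_cartan[OF assms, of "(ham_bracket m d ^^ n) z"] by simp
  qed simp
  ultimately show "finite (\<Union>n. ham_supp ((ham_bracket m d ^^ n) z))"
    by (auto simp: ham_carrier_iff intro: finite_subset[rotated])
qed

lemma ham_aut_ad_locally_finite:
  fixes \<sigma> :: "('k::field_char_0) ham \<Rightarrow> 'k ham"
  assumes aut: "ham_aut m \<sigma>" and x: "x \<in> ham_carrier m" and fin: "ham_ad_locally_finite m x"
  shows "ham_ad_locally_finite m (\<sigma> x)"
  unfolding ham_ad_locally_finite_def
proof
  fix w :: "'k ham" assume "w \<in> ham_carrier m"
  then obtain z where z: "z \<in> ham_carrier m" "w = \<sigma> z"
    using ham_aut_image[OF aut] by blast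
  define S where "S = (\<Union>n. ham_supp ((ham_bracket m x ^^ n) z))"
  define G where "G = (\<Union>t\<in>S. ham_supp (\<sigma> (ham_h t)))"
  have "finite S"
    using fin z(1) by (simp add: S_def ham_ad_locally_finite_def)
  moreover have "finite (ham_supp (\<sigma> (ham_h t)))" if "t \<in> S" for t
  proof -
    obtain n where "t \<in> ham_supp ((ham_bracket m x ^^ n) z)"
      using \<open>t \<in> S\<close> by (auto simp: S_def)
    then have "t \<in> lat (2*m)" "t \<noteq> (\<lambda>i. 0)"
      using funpow_ham_bracket_in_carrier[OF x z(1)] by (auto simp: ham_carrier_iff)
    then have "\<sigma> (ham_h t) \<in> ham_carrier m"
      by (intro ham_aut_in_carrier[OF aut] ham_h_in_carrier)
    then show ?thesis by (simp add: ham_carrier_iff)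
  qed
  ultimately have "finite G"
    unfolding G_def by (rule finite_UN_I)
  have "ham_supp ((ham_bracket m (\<sigma> x) ^^ n) w) \<subseteq> ham_supp w \<union> G" for n
  proof (cases n)
    case (Suc k)
    let ?q = "(ham_bracket m x ^^ n) z"
    have "?q \<in> ham_derived m"
      using Suc funpow_ham_bracket_in_carrier[OF x z(1)]
      by (simp add: ham_derived_def ham_bracket_in_carrier x)
    then have "ham_supp (\<sigma> ?q) \<subseteq> (\<Union>t\<in>ham_supp ?q. ham_supp (\<sigma> (ham_h t)))"
      using ham_aut_derived_supp[OF aut] by blast
    also have "\<dots> \<subseteq> G"
      unfolding G_def S_def by (rule UN_mono) auto
    finally show ?thesis
      using ham_aut_funpow_bracket[OF aut x z(1)] z(2) by auto
  qed simp
  then have "(\<Union>n. ham_supp ((ham_bracket m (\<sigma> x) ^^ n) w)) \<subseteq> ham_supp w \<union> G"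
    by blast
  then show "finite (\<Union>n. ham_supp ((ham_bracket m (\<sigma> x) ^^ n) w))"
    using \<open>finite G\<close> \<open>w \<in> ham_carrier m\<close> by (auto simp: ham_carrier_iff intro: finite_subset)
qed

lemma sympl_add_multiple: "sympl m r (\<lambda>i. a i + int n * r i) = sympl m r a"
  unfolding sympl_def by (rule sum.cong) (auto simp: algebra_simps)

lemma sympl_zero_right [simp]: "sympl m r (\<lambda>i. 0) = 0"
  by (simp add: sympl_def)

lemma sympl_unit_low:
  assumes "j < m"
  shows "sympl m r (\<lambda>i. if i = j then 1 else 0) = r (j + m)"
proof -
  have "sympl m r (\<lambda>i. if i = j then 1 else 0) = (\<Sum>i<m. if i = j then r (j + m) else 0)"
    unfolding sympl_def using assms by (intro sum.cong) auto
  then show ?thesis using assms by simp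
qed

lemma sympl_unit_high:
  assumes "j < m"
  shows "sympl m r (\<lambda>i. if i = j + m then 1 else 0) = - r j"
proof -
  have "sympl m r (\<lambda>i. if i = j + m then 1 else 0) = (\<Sum>i<m. if i = j then - r j else 0)"
    unfolding sympl_def by (intro sum.cong) auto
  then show ?thesis using assms by simp
qed

lemma sympl_nondegenerate:
  assumes "r \<in> lat (2*m)" "r \<noteq> (\<lambda>i. 0)"
  obtains s where "s \<in> lat (2*m)" "sympl m r s \<noteq> 0"
proof -
  obtain k where k: "r k \<noteq> 0" using assms(2) by auto
  then have "k < 2*m" using assms(1) by (auto simp: lat_def not_le[symmetric])
  show ?thesis
  proof (cases "k < m")
    case True
    then show ?thesis
      using that[of "\<lambda>i. if i = k + m then 1 else 0"] k by (simp add: lat_def sympl_unit_high)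
  next
    case False
    define j where "j = k - m"
    have "j < m" "k = j + m" using False \<open>k < 2*m\<close> by (simp_all add: j_def)
    then show ?thesis
      using that[of "\<lambda>i. if i = j then 1 else 0"] k by (simp add: lat_def sympl_unit_low)
  qed
qed

locale shift_invariant_order =
  fixes less :: "(nat \<Rightarrow> int) \<Rightarrow> (nat \<Rightarrow> int) \<Rightarrow> bool" (infix "\<prec>" 50)
  assumes irrefl: "\<not> a \<prec> a"
    and trans: "a \<prec> b \<Longrightarrow> b \<prec> c \<Longrightarrow> a \<prec> c"
    and total: "a \<noteq> b \<Longrightarrow> a \<prec> b \<or> b \<prec> a"
    and add_right: "a \<prec> b \<Longrightarrow> (\<lambda>i. a i + c i) \<prec> (\<lambda>i. b i + c i)"
begin

lemma asym: "a \<prec> b \<Longrightarrow> \<not> b \<prec> a"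
  using irrefl trans by blast

lemma diff_right: "a \<prec> b \<Longrightarrow> (\<lambda>i. a i - c i) \<prec> (\<lambda>i. b i - c i)"
  using add_right[of a b "\<lambda>i. - c i"] by simp

lemma diff_left: "a \<prec> b \<Longrightarrow> (\<lambda>i. c i - b i) \<prec> (\<lambda>i. c i - a i)"
  using add_right[of a b "\<lambda>i. c i - a i - b i"] by (simp add: algebra_simps)

lemma diff_above:
  assumes "\<not> t \<prec> (\<lambda>i. a i + c i)" and "r = c \<or> r \<prec> c" and "r \<noteq> c \<or> (\<lambda>i. a i + c i) \<prec> t"
  shows "a \<prec> (\<lambda>i. t i - r i)"
proof -
  have "(\<lambda>i. a i + c i) = t \<or> (\<lambda>i. a i + c i) \<prec> t"
    using assms(1) total by blast
  then have a_le: "a = (\<lambda>i. t i - c i) \<or> a \<prec> (\<lambda>i. t i - c i)"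
    using diff_right[of "\<lambda>i. a i + c i" t c] by auto
  show ?thesis
  proof (cases "r = c")
    case True
    then show ?thesis
      using assms(3) diff_right[of "\<lambda>i. a i + c i" t c] by simp
  next
    case False
    then have "(\<lambda>i. t i - c i) \<prec> (\<lambda>i. t i - r i)"
      using assms(2) diff_left by blast
    then show ?thesis
      using a_le trans by blast
  qed
qed

lemma finite_has_greatest:
  assumes "finite S" "S \<noteq> {}"
  obtains r where "r \<in> S" "\<And>s. s \<in> S \<Longrightarrow> s \<noteq> r \<Longrightarrow> s \<prec> r"
proof -
  have "\<exists>r\<in>S. \<forall>s\<in>S. s \<noteq> r \<longrightarrow> s \<prec> r"
    using assms
  proof (induction S rule: finite_ne_induct)
    case (insert x F)
    then obtain r where r: "r \<in> F" "\<forall>s\<in>F. s \<noteq> r \<longrightarrow> s \<prec> r" by blast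
    show ?case
    proof (cases "r \<prec> x")
      case True
      then show ?thesis using r trans by auto
    next
      case False
      then show ?thesis using r total[of x r] by auto
    qed
  qed simp
  then show ?thesis using that by blast
qed

text \<open>Positivity of the top exponent r0 keeps the h-part of x harmless: it only rescales
  coefficients of y, all of which sit at exponents strictly below a + r0.\<close>

lemma bracket_leading_term:
  fixes x y :: "('k::field) ham"
  assumes fin: "finite (ham_supp x)"
    and top: "r0 \<in> ham_supp x" "\<And>r. r \<in> ham_supp x \<Longrightarrow> r \<noteq> r0 \<Longrightarrow> r \<prec> r0"
    and pos: "(\<lambda>i. 0) \<prec> r0"
    and y: "snd y = (\<lambda>i. 0)" "\<And>t. t \<in> ham_supp y \<Longrightarrow> \<not> a \<prec> t"
  defines "b \<equiv> (\<lambda>i. a i + r0 i)"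
  shows "\<And>t. t \<in> ham_supp (ham_bracket m x y) \<Longrightarrow> \<not> b \<prec> t"
    and "b \<noteq> (\<lambda>i. 0) \<Longrightarrow> fst (ham_bracket m x y) b = fst x r0 * fst y a * of_int (sympl m r0 a)"
proof -
  have "a \<prec> b"
    using add_right[OF pos, of a] by (simp add: b_def add.commute)
  have y_above: "fst y t = 0" if "a \<prec> t" for t
    using y(2) that by (auto simp: ham_supp_def)
  have y_shift: "fst y (\<lambda>i. t i - r i) = 0"
    if "\<not> t \<prec> b" "r \<in> ham_supp x" "r \<noteq> r0 \<or> b \<prec> t" for t r
    using that top(2)[of r] unfolding b_def by (intro y_above diff_above) auto
  show "\<not> b \<prec> t" if "t \<in> ham_supp (ham_bracket m x y)" for t
  proof
    assume "b \<prec> t"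
    then have "(\<Sum>r\<in>ham_supp x. fst x r * fst y (\<lambda>i. t i - r i) * of_int (sympl m r (\<lambda>i. t i - r i))) = 0"
      using y_shift[of t] asym by (intro sum.neutral) auto
    moreover have "fst y t = 0"
      using y_above \<open>a \<prec> b\<close> \<open>b \<prec> t\<close> trans by blast
    ultimately have "fst (ham_bracket m x y) t = 0"
      unfolding fst_ham_bracket y(1) by (simp add: pair_def)
    then show False
      using that by (simp add: ham_supp_def)
  qed
  assume "b \<noteq> (\<lambda>i. 0)"
  have "(\<Sum>r\<in>ham_supp x. fst x r * fst y (\<lambda>i. b i - r i) * of_int (sympl m r (\<lambda>i. b i - r i)))
      = fst x r0 * fst y a * of_int (sympl m r0 a)"
    using y_shift[of b] irrefl by (subst sum.remove[OF fin top(1)], subst sum.neutral) (auto simp: b_def)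
  then show "fst (ham_bracket m x y) b = fst x r0 * fst y a * of_int (sympl m r0 a)"
    using \<open>b \<noteq> (\<lambda>i. 0)\<close> y_above[OF \<open>a \<prec> b\<close>] by (simp add: fst_ham_bracket y(1) pair_def)
qed

lemma funpow_bracket_leading_term:
  fixes x :: "('k::field) ham"
  assumes fin: "finite (ham_supp x)"
    and top: "r0 \<in> ham_supp x" "\<And>r. r \<in> ham_supp x \<Longrightarrow> r \<noteq> r0 \<Longrightarrow> r \<prec> r0"
    and pos: "(\<lambda>i. 0) \<prec> r0"
    and s: "sympl m r0 s \<noteq> 0"
  defines "y n \<equiv> (ham_bracket m x ^^ n) (ham_h s)" and "T n \<equiv> (\<lambda>i. s i + int n * r0 i)"
  shows "(\<forall>t\<in>ham_supp (y n). \<not> T n \<prec> t) \<and> fst (y n) (T n) = (fst x r0 * of_int (sympl m r0 s)) ^ n"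
proof (induction n)
  case 0
  show ?case by (simp add: y_def T_def irrefl) (simp add: ham_h_def)
next
  case (Suc n)
  have "snd (y n) = (\<lambda>i. 0)"
    by (cases n) (simp_all add: y_def ham_h_def)
  moreover have "(\<lambda>i. T n i + r0 i) = T (Suc n)"
    by (simp add: T_def algebra_simps)
  moreover have sympl_T: "sympl m r0 (T k) = sympl m r0 s" for k
    unfolding T_def by (rule sympl_add_multiple)
  \<comment> \<open>so the exponents T k avoid 0, where the bracket is truncated\<close>
  then have "T (Suc n) \<noteq> (\<lambda>i. 0)"
    using s by (metis sympl_zero_right)
  ultimately show ?case
    using bracket_leading_term[OF fin top pos, where y = "y n" and a = "T n" and m = m] Suc.IH
    by (simp add: y_def sympl_T)
qed

lemma not_ad_locally_finite:
  fixes x :: "('k::field_char_0) ham"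
  assumes x: "x \<in> ham_carrier m"
    and top: "r0 \<in> ham_supp x" "\<And>r. r \<in> ham_supp x \<Longrightarrow> r \<noteq> r0 \<Longrightarrow> r \<prec> r0"
    and pos: "(\<lambda>i. 0) \<prec> r0"
  shows "\<not> ham_ad_locally_finite m x"
proof
  assume fin: "ham_ad_locally_finite m x"
  have r0: "r0 \<in> lat (2*m)" "r0 \<noteq> (\<lambda>i. 0)"
    using x top(1) by (auto simp: ham_carrier_iff)
  obtain s where s: "s \<in> lat (2*m)" "sympl m r0 s \<noteq> 0"
    using sympl_nondegenerate[OF r0] .
  then have "s \<noteq> (\<lambda>i. 0)" by auto
  then have "(ham_h s :: 'k ham) \<in> ham_carrier m"
    using s(1) by (rule ham_h_in_carrier[rotated])
  then have "finite (\<Union>n. ham_supp ((ham_bracket m x ^^ n) (ham_h s)))"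
    using fin by (simp add: ham_ad_locally_finite_def)
  moreover have "range (\<lambda>n. \<lambda>i. s i + int n * r0 i) \<subseteq> (\<Union>n. ham_supp ((ham_bracket m x ^^ n) (ham_h s)))"
  proof clarify
    fix n
    have "fst x r0 * of_int (sympl m r0 s) \<noteq> 0"
      using top(1) s(2) by (simp add: ham_supp_def)
    moreover have "finite (ham_supp x)"
      using x by (simp add: ham_carrier_iff)
    ultimately have "(\<lambda>i. s i + int n * r0 i) \<in> ham_supp ((ham_bracket m x ^^ n) (ham_h s))"
      using funpow_bracket_leading_term[OF _ top pos s(2), of n] by (simp add: ham_supp_def)
    then show "(\<lambda>i. s i + int n * r0 i) \<in> (\<Union>n. ham_supp ((ham_bracket m x ^^ n) (ham_h s)))"
      by blast
  qed
  ultimately have "finite (range (\<lambda>n. \<lambda>i. s i + int n * r0 i))"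
    by (rule finite_subset[rotated])
  moreover have "inj (\<lambda>n. \<lambda>i. s i + int n * r0 i)"
  proof
    fix a b assume eq: "(\<lambda>i. s i + int a * r0 i) = (\<lambda>i. s i + int b * r0 i)"
    obtain k where "r0 k \<noteq> 0" using r0(2) by auto
    moreover have "s k + int a * r0 k = s k + int b * r0 k"
      using fun_cong[OF eq, of k] by simp
    ultimately show "a = b" by simp
  qed
  ultimately have "finite (UNIV :: nat set)"
    by (rule finite_imageD)
  then show False
    by simp
qed

end

lemma less_fun_total:
  fixes a b :: "'a::wellorder \<Rightarrow> 'b::linorder"
  assumes "a \<noteq> b"
  shows "less_fun a b \<or> less_fun b a"
proof -
  define k where "k = (LEAST k. a k \<noteq> b k)"
  have "\<exists>k. a k \<noteq> b k"
    using assms by auto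
  then have "a k \<noteq> b k"
    unfolding k_def by (rule LeastI_ex)
  moreover have below: "\<And>j. j < k \<Longrightarrow> a j = b j"
    unfolding k_def using not_less_Least by blast
  ultimately consider "a k < b k" | "b k < a k"
    by fastforce
  then show ?thesis
  proof cases
    case 1
    then have "less_fun a b" by (intro less_funI exI[of _ k]) (simp add: below)
    then show ?thesis ..
  next
    case 2
    then have "less_fun b a" by (intro less_funI exI[of _ k]) (simp add: below)
    then show ?thesis ..
  qed
qed

lemma less_fun_add_right:
  fixes a b c :: "'a::linorder \<Rightarrow> 'b::linordered_ab_group_add"
  shows "less_fun a b \<Longrightarrow> less_fun (\<lambda>i. a i + c i) (\<lambda>i. b i + c i)"
  unfolding less_fun_def by auto

interpretation lex: shift_invariant_order less_fun
proof
  show "less_fun a b \<Longrightarrow> less_fun b c \<Longrightarrow> less_fun a c" for a b c :: "nat \<Rightarrow> int"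
    by (rule less_fun_trans)
qed (simp_all add: less_fun_irrefl less_fun_total less_fun_add_right)

interpretation rev_lex: shift_invariant_order "\<lambda>a b. less_fun b a"
proof
  show "less_fun b a \<Longrightarrow> less_fun c b \<Longrightarrow> less_fun c a" for a b c :: "nat \<Rightarrow> int"
    by (rule less_fun_trans)
qed (simp_all add: less_fun_irrefl less_fun_total less_fun_add_right)

lemma ham_ad_locally_finite_imp_cartan:
  fixes x :: "('k::field_char_0) ham"
  assumes x: "x \<in> ham_carrier m" and fin: "ham_ad_locally_finite m x"
  shows "x \<in> ham_cartan m"
proof (rule ccontr)
  assume "x \<notin> ham_cartan m"
  then have "ham_supp x \<noteq> {}"
    using x by (auto simp: ham_cartan_def ham_supp_def)
  moreover have "finite (ham_supp x)" and nonzero: "\<And>r. r \<in> ham_supp x \<Longrightarrow> r \<noteq> (\<lambda>i. 0)"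
    using x by (auto simp: ham_carrier_iff)
  ultimately obtain r1 where r1: "r1 \<in> ham_supp x" "\<And>r. r \<in> ham_supp x \<Longrightarrow> r \<noteq> r1 \<Longrightarrow> less_fun r r1"
    using lex.finite_has_greatest by blast
  show False
  proof (cases "less_fun (\<lambda>i. 0) r1")
    case True
    then show False using lex.not_ad_locally_finite[OF x r1] fin by blast
  next
    case False
    \<comment> \<open>the least exponent is then negative, i.e. the top one for the reversed order\<close>
    then have "less_fun r1 (\<lambda>i. 0)"
      using less_fun_total nonzero[OF r1(1)] by blast
    obtain r2 where r2: "r2 \<in> ham_supp x" "\<And>r. r \<in> ham_supp x \<Longrightarrow> r \<noteq> r2 \<Longrightarrow> less_fun r2 r"
      using rev_lex.finite_has_greatest \<open>finite (ham_supp x)\<close> \<open>ham_supp x \<noteq> {}\<close> by blast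
    have "less_fun r2 (\<lambda>i. 0)"
    proof (cases "r2 = r1")
      case False
      then show ?thesis
        using r2(2)[OF r1(1)] \<open>less_fun r1 (\<lambda>i. 0)\<close> less_fun_trans by blast
    qed (use \<open>less_fun r1 (\<lambda>i. 0)\<close> in simp)
    then show False using rev_lex.not_ad_locally_finite[OF x r2] fin by blast
  qed
qed

lemma ham_aut_cartan:
  fixes \<sigma> :: "('k::field_char_0) ham \<Rightarrow> 'k ham"
  assumes aut: "ham_aut m \<sigma>" and d: "d \<in> ham_cartan m"
  shows "\<sigma> d \<in> ham_cartan m"
proof -
  have "d \<in> ham_carrier m" using d by (simp add: ham_cartan_def)
  then show ?thesis
    using ham_aut_ad_locally_finite[OF aut _ ham_cartan_ad_locally_finite[OF d]]
    by (intro ham_ad_locally_finite_imp_cartan ham_aut_in_carrier[OF aut])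
qed

lemma ham_aut_derived:
  fixes \<sigma> :: "('k::field_char_0) ham \<Rightarrow> 'k ham"
  assumes "ham_aut m \<sigma>" and "q \<in> ham_derived m"
  shows "\<sigma> q \<in> ham_derived m"
  using ham_aut_derived_supp[OF assms] by blast

lemma ham_aut_split:
  fixes \<sigma> :: "('k::field_char_0) ham \<Rightarrow> 'k ham"
  assumes aut: "ham_aut m \<sigma>" and z: "z \<in> ham_carrier m"
  obtains d q where "\<sigma> z = ham_add d q" "fst d = (\<lambda>r. 0)" "snd q = (\<lambda>i. 0)"
    and "snd d = (\<lambda>i. 0) \<longleftrightarrow> snd z = (\<lambda>i. 0)" "fst q = (\<lambda>r. 0) \<longleftrightarrow> fst z = (\<lambda>r. 0)"
proof -
  let ?d = "((\<lambda>r. 0), snd z)" and ?q = "(fst z, (\<lambda>i. 0))"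
  have "ham_supp ?d = {}" "ham_supp ?q = ham_supp z"
    by (simp_all add: ham_supp_def)
  then have parts: "?d \<in> ham_cartan m" "?q \<in> ham_derived m"
    using z by (simp_all add: ham_cartan_def ham_derived_def ham_carrier_iff)
  then have carrier: "?d \<in> ham_carrier m" "?q \<in> ham_carrier m"
    by (simp_all add: ham_cartan_def ham_derived_def)
  have "\<sigma> z = \<sigma> (ham_add ?d ?q)"
    by (simp add: ham_add_def)
  also have "\<dots> = ham_add (\<sigma> ?d) (\<sigma> ?q)"
    using ham_aut_add[OF aut carrier] .
  finally have "\<sigma> z = ham_add (\<sigma> ?d) (\<sigma> ?q)" .
  moreover have "fst (\<sigma> ?d) = (\<lambda>r. 0)" "snd (\<sigma> ?q) = (\<lambda>i. 0)"
    using ham_aut_cartan[OF aut parts(1)] ham_aut_derived[OF aut parts(2)]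
    by (simp_all add: ham_cartan_def ham_derived_def)
  moreover have "\<sigma> ?d = ham_zero \<longleftrightarrow> snd z = (\<lambda>i. 0)" "\<sigma> ?q = ham_zero \<longleftrightarrow> fst z = (\<lambda>r. 0)"
    using ham_aut_eq_zero_iff[OF aut carrier(1)] ham_aut_eq_zero_iff[OF aut carrier(2)]
    by (auto simp: ham_zero_def)
  ultimately show ?thesis
    using that[of "\<sigma> ?d" "\<sigma> ?q"] by (simp add: ham_zero_def prod_eq_iff)
qed

lemma ham_aut_derived_iff:
  fixes \<sigma> :: "('k::field_char_0) ham \<Rightarrow> 'k ham"
  assumes aut: "ham_aut m \<sigma>" and z: "z \<in> ham_carrier m"
  shows "\<sigma> z \<in> ham_derived m \<longleftrightarrow> z \<in> ham_derived m"
proof -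
  obtain d q where "\<sigma> z = ham_add d q" "snd q = (\<lambda>i. 0)" "snd d = (\<lambda>i. 0) \<longleftrightarrow> snd z = (\<lambda>i. 0)"
    using ham_aut_split[OF aut z] by blast
  then have "snd (\<sigma> z) = (\<lambda>i. 0) \<longleftrightarrow> snd z = (\<lambda>i. 0)"
    by (simp add: ham_add_def)
  then show ?thesis
    using z ham_aut_in_carrier[OF aut z] by (simp add: ham_derived_def)
qed

lemma ham_aut_cartan_iff:
  fixes \<sigma> :: "('k::field_char_0) ham \<Rightarrow> 'k ham"
  assumes aut: "ham_aut m \<sigma>" and z: "z \<in> ham_carrier m"
  shows "\<sigma> z \<in> ham_cartan m \<longleftrightarrow> z \<in> ham_cartan m"
proof -
  obtain d q where "\<sigma> z = ham_add d q" "fst d = (\<lambda>r. 0)" "fst q = (\<lambda>r. 0) \<longleftrightarrow> fst z = (\<lambda>r. 0)"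
    using ham_aut_split[OF aut z] by blast
  then have "fst (\<sigma> z) = (\<lambda>r. 0) \<longleftrightarrow> fst z = (\<lambda>r. 0)"
    by (simp add: ham_add_def)
  then show ?thesis
    using z ham_aut_in_carrier[OF aut z] by (simp add: ham_cartan_def)
qed

lemma image_eq_if_Int_vimage_eq:
  assumes "f ` C = C" and "C \<inter> f -` A = A"
  shows "f ` A = A"
proof
  show "f ` A \<subseteq> A" using assms(2) by blast
  show "A \<subseteq> f ` A"
  proof
    fix a assume "a \<in> A"
    then obtain c where "c \<in> C" "a = f c" using assms by blast
    then show "a \<in> f ` A" using \<open>a \<in> A\<close> assms(2) by blast
  qed
qed

theorem lemma3p5:
  fixes m :: nat and \<sigma> :: "('k::{alg_closed_field, field_char_0}) ham \<Rightarrow> 'k ham"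
  assumes "m \<ge> 1"
    and "ham_aut m \<sigma>"
  shows "\<sigma> ` ham_derived m = ham_derived m \<and> \<sigma> ` ham_cartan m = ham_cartan m"
proof
  note surj = ham_aut_image[OF assms(2)]
  have "ham_carrier m \<inter> \<sigma> -` ham_derived m = ham_derived m"
    using ham_aut_derived_iff[OF assms(2)] unfolding ham_derived_def by blast
  then show "\<sigma> ` ham_derived m = ham_derived m"
    by (rule image_eq_if_Int_vimage_eq[OF surj])
  have "ham_carrier m \<inter> \<sigma> -` ham_cartan m = ham_cartan m"
    using ham_aut_cartan_iff[OF assms(2)] unfolding ham_cartan_def by blast
  then show "\<sigma> ` ham_cartan m = ham_cartan m"
    by (rule image_eq_if_Int_vimage_eq[OF surj])
qed

end
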